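(* Let $H$ be a $3$-graph, let $K_H=3v(H)^3$, let $C>0$ and $\delta\in\mathbb{R}$, and let $G$ be a $3$-partite $3$-graph with vertex classes $X,Y,Z$, each of size $n$. If $e(G)\ge C n^{3-\delta}$, then there exists a vertex $z\in Z$ such that (1) $e(\mathcal{L}_z)\ge (C/2)\,n^{2-\delta}$, and (2) the number of $H$-forbidden $4$-cycles contained in $\mathcal{L}_z$ is at most $(2K_H/C)\,n^{1+\delta}\,e(\mathcal{L}_z)$.
   Context: A $3$-graph is a $3$-uniform hypergraph; $v(\cdot)$ and $e(\cdot)$ denote numbers of vertices and edges. $G$ is $3$-partite with classes $X,Y,Z$: every edge of $G$ contains exactly one vertex of each class. For $z\in Z$, the link graph $\mathcal{L}_z$ is the bipartite graph between $X$ and $Y$ whose edges are the pairs $xy$ ($x\in X$, $y\in Y$) such that $\{x,y,z\}$ is an edge of $G$. A $4$-cycle between $X$ and $Y$ means a $4$-cycle in the complete bipartite graph on $X\cup Y$ (two vertices in $X$, two in $Y$). For such a $4$-cycle $\mathcal{C}$, a $4$-disk with boundary $\mathcal{C}$ and centre $z\in Z$ is the set of four edges $\{x,y,z\}$ of $G$, $xy\in\mathcal{C}$, which exists exactly when $\mathcal{C}\subseteq\mathcal{L}_z$; so the number of $4$-disks with boundary $\mathcal{C}$ equals the number of $z\in Z$ with $\mathcal{C}\subseteq \mathcal{L}_z$. With $K_H=3v(H)^3$, a $4$-cycle between $X$ and $Y$ is $H$-admissible if it is the boundary of more than $K_H$ distinct $4$-disks in $G$, and $H$-forbidden if it is the boundary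 of at most $K_H$ (possibly $0$) distinct $4$-disks in $G$. *)

theory Defs
  imports Main "HOL-Analysis.Analysis"
begin

definition three_graph :: "'a set \<Rightarrow> 'a set set \<Rightarrow> bool" where
  "three_graph V E \<longleftrightarrow> finite V \<and> (\<forall>e\<in>E. e \<subseteq> V \<and> card e = 3)"

definition three_partite :: "'a set \<Rightarrow> 'a set \<Rightarrow> 'a set \<Rightarrow> 'a set set \<Rightarrow> bool" where
  "three_partite X Y Z E \<longleftrightarrow>
     X \<inter> Y = {} \<and> X \<inter> Z = {} \<and> Y \<inter> Z = {} \<and>
     (\<forall>e\<in>E. \<exists>x\<in>X. \<exists>y\<in>Y. \<exists>z\<in>Z. e = {x, y, z})"

definition link :: "'a set \<Rightarrow> 'a set \<Rightarrow> 'a set set \<Rightarrow> 'a \<Rightarrow> ('a \<times> 'a) set" where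
  "link X Y E z = {(x, y). x \<in> X \<and> y \<in> Y \<and> {x, y, z} \<in> E}"

text \<open>4-cycles in the complete bipartite graph between X and Y, each given by its
  edge set (a 4-cycle is determined by its edge set).\<close>
definition cycles4 :: "'a set \<Rightarrow> 'a set \<Rightarrow> ('a \<times> 'a) set set" where
  "cycles4 X Y = {{(x1, y1), (x1, y2), (x2, y1), (x2, y2)} | x1 x2 y1 y2.
      x1 \<in> X \<and> x2 \<in> X \<and> y1 \<in> Y \<and> y2 \<in> Y \<and> x1 \<noteq> x2 \<and> y1 \<noteq> y2}"

definition num_disks :: "'a set \<Rightarrow> 'a set \<Rightarrow> 'a set \<Rightarrow> 'a set set \<Rightarrow> ('a \<times> 'a) set \<Rightarrow> nat" where
  "num_disks X Y Z E Cy = card {z \<in> Z. Cy \<subseteq> link X Y E z}"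

definition K_H :: "'b set \<Rightarrow> nat" where
  "K_H VH = 3 * card VH ^ 3"

definition forbidden :: "'b set \<Rightarrow> 'a set \<Rightarrow> 'a set \<Rightarrow> 'a set \<Rightarrow> 'a set set \<Rightarrow> ('a \<times> 'a) set \<Rightarrow> bool" where
  "forbidden VH X Y Z E Cy \<longleftrightarrow> Cy \<in> cycles4 X Y \<and> num_disks X Y Z E Cy \<le> K_H VH"

definition admissible :: "'b set \<Rightarrow> 'a set \<Rightarrow> 'a set \<Rightarrow> 'a set \<Rightarrow> 'a set set \<Rightarrow> ('a \<times> 'a) set \<Rightarrow> bool" where
  "admissible VH X Y Z E Cy \<longleftrightarrow> Cy \<in> cycles4 X Y \<and> num_disks X Y Z E Cy > K_H VH"

end

theory Submission
  imports Defs
begin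

text \<open>Every edge of G is recovered from some z and some edge of its link, so the link sizes add
  up to at least e(G); dually, summing over z the forbidden 4-cycles in the links counts every
  forbidden cycle once per disk it bounds, hence at most K_H times. Thus on average a link has
  many edges and few forbidden cycles, and averaging over the vertices with large links yields
  a single z with both properties.\<close>

lemma cycles4_subset_image:
  "cycles4 X Y \<subseteq> (\<lambda>(x1, x2, y1, y2). {(x1, y1), (x1, y2), (x2, y1), (x2, y2)}) ` (X \<times> X \<times> Y \<times> Y)"
  unfolding cycles4_def by force

lemma finite_cycles4: "finite X \<Longrightarrow> finite Y \<Longrightarrow> finite (cycles4 X Y)"
  by (rule finite_subset[OF cycles4_subset_image]) simp

lemma card_cycles4_le:
  assumes "finite X" "finite Y"
  shows "card (cycles4 X Y) \<le> card X ^ 2 * card Y ^ 2"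
proof -
  have "card (cycles4 X Y) \<le> card (X \<times> X \<times> Y \<times> Y)"
    using assms by (intro order_trans[OF card_mono[OF _ cycles4_subset_image] card_image_le]) auto
  also have "\<dots> = card X ^ 2 * card Y ^ 2"
    by (simp add: card_cartesian_product power2_eq_square)
  finally show ?thesis .
qed

lemma finite_link: "finite X \<Longrightarrow> finite Y \<Longrightarrow> finite (link X Y E z)"
  by (rule finite_subset[of _ "X \<times> Y"]) (auto simp: link_def)

lemma card_le_sum_card_link:
  assumes "three_partite X Y Z E" "finite X" "finite Y" "finite Z"
  shows "card E \<le> (\<Sum>z\<in>Z. card (link X Y E z))"
proof -
  let ?S = "SIGMA z:Z. link X Y E z"
  have fin: "finite ?S" by (intro finite_SigmaI assms(4) finite_link[OF assms(2,3)])
  have "E \<subseteq> (\<lambda>(z, x, y). {x, y, z}) ` ?S"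
  proof
    fix e assume "e \<in> E"
    from assms(1) \<open>e \<in> E\<close> have "\<exists>x\<in>X. \<exists>y\<in>Y. \<exists>z\<in>Z. e = {x, y, z}"
      by (simp add: three_partite_def)
    then obtain x y z where "x \<in> X" "y \<in> Y" "z \<in> Z" "e = {x, y, z}"
      by (elim bexE)
    with \<open>e \<in> E\<close> have "(z, x, y) \<in> ?S" by (simp add: link_def)
    with \<open>e = {x, y, z}\<close> show "e \<in> (\<lambda>(z, x, y). {x, y, z}) ` ?S" by force
  qed
  then have "card E \<le> card ((\<lambda>(z, x, y). {x, y, z}) ` ?S)"
    by (rule card_mono[OF finite_imageI[OF fin]])
  also have "\<dots> \<le> card ?S" by (rule card_image_le[OF fin])
  also have "\<dots> = (\<Sum>z\<in>Z. card (link X Y E z))"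
    by (simp add: card_SigmaI assms(4) finite_link[OF assms(2,3)])
  finally show ?thesis .
qed

lemma sum_card_forbidden_in_link_le:
  assumes "finite X" "finite Y" "finite Z"
  shows "(\<Sum>z\<in>Z. card {Cy. forbidden VH X Y Z E Cy \<and> Cy \<subseteq> link X Y E z})
           \<le> K_H VH * card (cycles4 X Y)"
proof -
  define F where "F = {Cy. forbidden VH X Y Z E Cy}"
  have F_sub: "F \<subseteq> cycles4 X Y" by (auto simp: F_def forbidden_def)
  have fin_F: "finite F" using finite_subset[OF F_sub finite_cycles4[OF assms(1,2)]] .
  have "(\<Sum>z\<in>Z. card {Cy. forbidden VH X Y Z E Cy \<and> Cy \<subseteq> link X Y E z})
          = (\<Sum>z\<in>Z. \<Sum>Cy\<in>F. if Cy \<subseteq> link X Y E z then 1 else 0)"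
    using fin_F by (intro sum.cong refl) (simp add: sum.If_cases F_def conj_commute Int_def)
  also have "\<dots> = (\<Sum>Cy\<in>F. \<Sum>z\<in>Z. if Cy \<subseteq> link X Y E z then 1 else 0)"
    by (rule sum.swap)
  also have "\<dots> = (\<Sum>Cy\<in>F. num_disks X Y Z E Cy)"
    using assms(3) by (simp add: sum.If_cases num_disks_def Int_def conj_commute)
  also have "\<dots> \<le> (\<Sum>Cy\<in>F. K_H VH)"
    by (rule sum_mono) (simp add: F_def forbidden_def)
  also have "\<dots> \<le> K_H VH * card (cycles4 X Y)"
    using card_mono[OF finite_cycles4[OF assms(1,2)] F_sub] by simp
  finally show ?thesis .
qed

lemma averaging_large_and_sparse:
  fixes e f :: "'a \<Rightarrow> real"
  assumes "finite Z" "\<And>z. z \<in> Z \<Longrightarrow> f z \<ge> 0"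
    and "S > 0" "S \<le> (\<Sum>z\<in>Z. e z)" "(\<Sum>z\<in>Z. f z) \<le> F"
    and "t \<ge> 0" "real (card Z) * t \<le> S / 2"
  shows "\<exists>z\<in>Z. e z \<ge> t \<and> f z \<le> (2 * F / S) * e z"
proof (rule ccontr)
  assume contra: "\<not> ?thesis"
  define A where "A = {z\<in>Z. e z \<ge> t}"
  have A_sub: "A \<subseteq> Z" by (auto simp: A_def)
  have "(\<Sum>z\<in>Z - A. e z) \<le> (\<Sum>z\<in>Z - A. t)"
    by (rule sum_mono) (auto simp: A_def)
  also have "\<dots> \<le> real (card Z) * t"
    using card_mono[OF assms(1), of "Z - A"] assms(6) by (simp add: mult_right_mono)
  finally have "S / 2 \<le> (\<Sum>z\<in>A. e z)"
    using sum.subset_diff[OF A_sub assms(1), of e] assms(4,7) by linarith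
  then have "A \<noteq> {}" using assms(3) by auto
  have "2 * F * (\<Sum>z\<in>A. e z) = (\<Sum>z\<in>A. S * ((2 * F / S) * e z))"
    using assms(3) by (simp add: sum_distrib_left)
  also have "\<dots> < (\<Sum>z\<in>A. S * f z)"
  proof (rule sum_strict_mono[OF finite_subset[OF A_sub assms(1)] \<open>A \<noteq> {}\<close>])
    fix z assume "z \<in> A"
    with contra have "(2 * F / S) * e z < f z" by (auto simp: A_def not_le)
    then show "S * ((2 * F / S) * e z) < S * f z" using assms(3) by (simp add: field_simps)
  qed
  also have "\<dots> = S * (\<Sum>z\<in>A. f z)" by (simp add: sum_distrib_left)
  also have "\<dots> \<le> S * (\<Sum>z\<in>Z. f z)"
    using sum_mono2[OF assms(1) A_sub, of f] assms(2,3) by simp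
  also have "\<dots> \<le> S * F" using assms(3,5) by simp
  finally have "2 * F * (\<Sum>z\<in>A. e z) < S * F" .
  moreover have "F \<ge> 0" using sum_nonneg[of Z f] assms(2,5) by force
  then have "S * F \<le> 2 * F * (\<Sum>z\<in>A. e z)"
    using mult_left_mono[OF \<open>S / 2 \<le> (\<Sum>z\<in>A. e z)\<close>, of "2 * F"] by (simp add: mult.commute)
  ultimately show False by simp
qed

theorem lemma3p1:
  fixes VH :: "'b set" and EH :: "'b set set"
    and X Y Z :: "'a set" and E :: "'a set set"
    and n :: nat and C \<delta> :: real
  assumes "three_graph VH EH"
    and "three_partite X Y Z E"
    and "finite X" "finite Y" "finite Z"
    and "card X = n" "card Y = n" "card Z = n" "n \<ge> 1"
    and "C > 0"
    and "real (card E) \<ge> C * real n powr (3 - \<delta>)"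
  shows "\<exists>z\<in>Z. real (card (link X Y E z)) \<ge> (C / 2) * real n powr (2 - \<delta>) \<and>
           real (card {Cy. forbidden VH X Y Z E Cy \<and> Cy \<subseteq> link X Y E z})
             \<le> (2 * real (K_H VH) / C) * real n powr (1 + \<delta>) * real (card (link X Y E z))"
proof -
  have n_pos: "real n > 0" using assms(9) by simp
  have edges: "C * real n powr (3 - \<delta>) \<le> (\<Sum>z\<in>Z. real (card (link X Y E z)))"
    using assms(11) card_le_sum_card_link[OF assms(2-5)] by (simp flip: of_nat_sum)
  have "(\<Sum>z\<in>Z. card {Cy. forbidden VH X Y Z E Cy \<and> Cy \<subseteq> link X Y E z})
          \<le> K_H VH * card (cycles4 X Y)"
    by (rule sum_card_forbidden_in_link_le[OF assms(3-5)])
  also have "\<dots> \<le> K_H VH * (card X ^ 2 * card Y ^ 2)"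
    using card_cycles4_le[OF assms(3,4)] by simp
  also have "\<dots> = K_H VH * n ^ 4"
    using assms(6,7) by (simp flip: power_add)
  finally have forbidden: "(\<Sum>z\<in>Z. real (card {Cy. forbidden VH X Y Z E Cy \<and> Cy \<subseteq> link X Y E z}))
                          \<le> real (K_H VH) * real n ^ 4"
    by (simp flip: of_nat_sum of_nat_power of_nat_mult)
  have threshold: "real (card Z) * ((C / 2) * real n powr (2 - \<delta>)) = C * real n powr (3 - \<delta>) / 2"
    using n_pos assms(8) by (simp add: powr_mult_base)
  have "real n powr (1 + \<delta>) * real n powr (3 - \<delta>) = real n ^ 4"
    using n_pos by (simp flip: powr_add add: powr_numeral)
  then have ratio: "2 * (real (K_H VH) * real n ^ 4) / (C * real n powr (3 - \<delta>))
                 = 2 * real (K_H VH) / C * real n powr (1 + \<delta>)"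
    using n_pos assms(10) by (simp flip: \<open>_ = real n ^ 4\<close>)
  have "C * real n powr (3 - \<delta>) > 0" "(C / 2) * real n powr (2 - \<delta>) \<ge> 0"
    using assms(10) n_pos by simp_all
  from averaging_large_and_sparse[OF assms(5) of_nat_0_le_iff this(1) edges forbidden this(2)
      eq_refl[OF threshold]]
  show ?thesis unfolding ratio .
qed

end
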